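(* Let $t$ be a positive integer that is not a power of two. Then the number of $k\in\{0,1,\dots,t\}$ for which $\mathfrak{a}_t(t,k)$ is odd is an odd integer greater than one (in particular, not a power of two).
   Context: Let $\mathfrak{a}_t:\mathbb{Z}\times\mathbb{Z}\to\mathbb{Z}$ be the unique function satisfying: (i) $\mathfrak{a}_t(0,0)=1$; (ii) $\mathfrak{a}_t(n,k)=0$ if $n<0$, or $k<0$, or $k>\min\{\lfloor (n-1+t)/2\rfloor, n\}$; (iii) $\mathfrak{a}_t(n,k)=\mathfrak{a}_t(n-1,k-1)+\mathfrak{a}_t(n-1,k)$ for all other integer pairs $(n,k)$. *)

theory Defs
  imports Main
begin

fun frak_a_aux :: "int \<Rightarrow> nat \<Rightarrow> int \<Rightarrow> int" where
  "frak_a_aux t 0 k = (if k = 0 then 1 else 0)"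
| "frak_a_aux t (Suc m) k =
     (if k < 0 \<or> k > min ((int (Suc m) - 1 + t) div 2) (int (Suc m)) then 0
      else frak_a_aux t m (k - 1) + frak_a_aux t m k)"

definition frak_a :: "int \<Rightarrow> int \<Rightarrow> int \<Rightarrow> int" where
  "frak_a t n k = (if n < 0 then 0 else frak_a_aux t (nat n) k)"

end

theory Submission
  imports Defs "HOL-Computational_Algebra.Primes"
begin

text \<open>Below the diagonal (n < t) the cap min(\<lfloor>(n-1+t)/2\<rfloor>, n) equals n, so a_t(n, k) is
  the binomial coefficient; on the diagonal the cap drops to t - 1, so row t of a_t is row t
  of Pascal's triangle with its last entry (which is odd) removed. The odd entries of row n > 0 are
  even in number because the row sums to 2^n, hence an odd number of them survive. Writing
  n = 2^v q with q odd, the entries at k = 0, 2^v, n are odd, since C(2^v q, 2^v) \<equiv> C(q, 1) (mod 2);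
  when n is not a power of two these are three distinct positions.\<close>

definition choose_int :: "nat \<Rightarrow> int \<Rightarrow> int" where
  "choose_int n k = (if k < 0 then 0 else int (n choose nat k))"

lemma choose_int_eq_0: "k < 0 \<or> int n < k \<Longrightarrow> choose_int n k = 0"
  by (auto simp: choose_int_def binomial_eq_0)

lemma choose_int_Suc: "choose_int (Suc m) k = choose_int m (k - 1) + choose_int m k"
proof (cases "k \<le> 0")
  case True
  then show ?thesis by (auto simp: choose_int_def)
next
  case False
  define j where "j = nat k - 1"
  have "nat k = Suc j" "nat (k - 1) = j"
    using False by (simp_all add: j_def nat_diff_distrib)
  then show ?thesis using False by (simp add: choose_int_def)
qed

lemma frak_a_aux_eq_choose_int:
  "int n < t \<Longrightarrow> frak_a_aux t n k = choose_int n k"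
proof (induction n arbitrary: k)
  case 0
  then show ?case by (simp add: choose_int_def)
next
  case (Suc m)
  have "min ((int (Suc m) - 1 + t) div 2) (int (Suc m)) = int (Suc m)"
    using Suc.prems by linarith
  moreover have "frak_a_aux t m k' = choose_int m k'" for k'
    using Suc by simp
  ultimately show ?case
    by (simp add: choose_int_Suc choose_int_eq_0 del: of_nat_Suc)
qed

lemma frak_a_diag:
  assumes "0 < t"
  shows "frak_a t t k = (if k = t then 0 else choose_int (nat t) k)"
proof -
  define m where "m = nat t - 1"
  have t: "t = int (Suc m)" and nat_t: "nat t = Suc m"
    using assms by (simp_all add: m_def)
  have cap: "(int (Suc m) - 1 + t) div 2 = int m"
    using t by simp
  have "frak_a t t k = (if k < 0 \<or> int m < k then 0 else choose_int m (k - 1) + choose_int m k)"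
    unfolding frak_a_def nat_t using assms cap t by (simp add: frak_a_aux_eq_choose_int del: of_nat_Suc)
  then show ?thesis
    unfolding nat_t choose_int_Suc using t by (auto simp: choose_int_eq_0)
qed

text \<open>Pascal's rule applied twice gives C(m+2, k+2) = C(m, k+2) + 2 C(m, k+1) + C(m, k), so modulo 2
  row 2n+2 is obtained from row 2n by adding entries two apart.\<close>

lemma parity_choose_double:
  "odd ((2 * n) choose (2 * j)) = odd (n choose j) \<and> even ((2 * n) choose (2 * j + 1))"
proof (induction n arbitrary: j)
  case 0
  then show ?case by (cases j) auto
next
  case (Suc n)
  show ?case
  proof (cases j)
    case 0
    then show ?thesis by simp
  next
    case (Suc i)
    have "2 * Suc n = Suc (Suc (2 * n))" "2 * j = Suc (Suc (2 * i))" "2 * j + 1 = Suc (Suc (2 * i + 1))"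
      using Suc by auto
    then have "(2 * Suc n) choose (2 * j) = ((2 * n) choose (2 * j)) + 2 * ((2 * n) choose (2 * i + 1)) + ((2 * n) choose (2 * i))"
      and "(2 * Suc n) choose (2 * j + 1) = ((2 * n) choose (2 * j + 1)) + 2 * ((2 * n) choose (2 * j)) + ((2 * n) choose (2 * i + 1))"
      by simp_all
    then show ?thesis
      using Suc.IH[of j] Suc.IH[of i] Suc by simp
  qed
qed

lemma odd_choose_pow2_mult_iff:
  "odd ((2 ^ v * n) choose (2 ^ v * j)) \<longleftrightarrow> odd (n choose j)"
proof (induction v)
  case 0
  then show ?case by simp
next
  case (Suc v)
  then show ?case
    using parity_choose_double[of "2 ^ v * n" "2 ^ v * j"] by (simp add: mult.assoc)
qed

lemma even_card_odd_choose:
  "0 < n \<Longrightarrow> even (card {k \<in> {..n}. odd (n choose k)})"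
  using even_sum_iff[of "{..n}" "\<lambda>k. n choose k"] by (simp add: choose_row_sum)

lemma three_le_card_odd_choose:
  assumes "0 < n" and "\<nexists>m. n = 2 ^ m"
  shows "3 \<le> card {k \<in> {..n}. odd (n choose k)}"
proof -
  define v where "v = multiplicity 2 n"
  obtain q where q: "n = 2 ^ v * q" "odd q"
    using multiplicity_decompose'[of n 2] assms(1) unfolding v_def by auto
  with assms have "1 < q"
    by (metis One_nat_def mult.right_neutral nat_neq_iff less_one odd_pos)
  then have "2 ^ v < n"
    using q(1) by simp
  moreover have "odd (n choose 2 ^ v)"
    using odd_choose_pow2_mult_iff[of v q 1] q by simp
  ultimately have "{0, 2 ^ v, n} \<subseteq> {k \<in> {..n}. odd (n choose k)}"
    by auto
  moreover have "card {0, 2 ^ v, n} = 3"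
    using \<open>2 ^ v < n\<close> by simp
  ultimately show ?thesis
    by (metis card_mono finite_Collect_conjI finite_atMost Collect_mem_eq)
qed

lemma card_odd_frak_a_diag:
  assumes "0 < t"
  shows "card {k \<in> {0..t}. odd (frak_a t t k)} = card {k \<in> {..nat t}. odd (nat t choose k)} - 1"
proof -
  have "{k \<in> {0..t}. odd (frak_a t t k)} = int ` {k \<in> {..<nat t}. odd (nat t choose k)}"
    using assms by (force simp: frak_a_diag choose_int_def image_iff)
  moreover have "{k \<in> {..nat t}. odd (nat t choose k)} = insert (nat t) {k \<in> {..<nat t}. odd (nat t choose k)}"
    by auto
  ultimately show ?thesis
    by (simp add: card_image)
qed

theorem lemma4p4:
  fixes t :: int
  assumes "t > 0"
    and "\<not> (\<exists>m::nat. t = 2 ^ m)"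
  shows "odd (card {k \<in> {0..t}. odd (frak_a t t k)})
       \<and> card {k \<in> {0..t}. odd (frak_a t t k)} > 1
       \<and> \<not> (\<exists>m::nat. card {k \<in> {0..t}. odd (frak_a t t k)} = 2 ^ m)"
proof -
  let ?c = "card {k \<in> {..nat t}. odd (nat t choose k)}"
  have "\<nexists>m. nat t = 2 ^ m"
    using assms by (metis int_nat_eq less_le of_nat_numeral of_nat_power)
  then have "3 \<le> ?c" and "even ?c"
    using assms(1) three_le_card_odd_choose even_card_odd_choose by simp_all
  then have odd: "odd (?c - 1)" and gt_1: "1 < ?c - 1"
    by auto
  have odd_not_pow2: "c \<noteq> 2 ^ m" if "odd c" "1 < c" for c m :: nat
    using that by (cases m) auto
  show ?thesis
    unfolding card_odd_frak_a_diag[OF assms(1)] using odd gt_1 odd_not_pow2 by blast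
qed

end
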